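(* If an infinite word $w$ is abelian-square rich and linearly recurrent, then it is uniformly abelian-square rich.
   Context: For a word $u$ over $\Sigma=\{a_1,\dots,a_\sigma\}$, its Parikh vector is $P(u)=(|u|_{a_1},\dots,|u|_{a_\sigma})$, where $|u|_a$ counts occurrences of $a$. An abelian square is a word $v_1v_2$ with $P(v_1)=P(v_2)$. The factor complexity $p_w(n)$ is the number of distinct factors of $w$ of length $n$. The recurrence index $R_w(n)$ is the least $m$ such that every factor of $w$ of length $m$ contains all factors of $w$ of length $n$; $w$ is linearly recurrent if $R_w(n)$ is defined for all $n$ and $R_w(n)/n$ is bounded. An infinite word $w$ is abelian-square rich if there is a constant $C>0$ such that for all sufficiently large $n$, $\frac{1}{p_w(n)}\sum_{v}(\text{number of distinct abelian square factors of } v)\geq Cn^2$, the sum over factors $v$ of $w$ of length $n$. It is uniformly abelian-square rich if there is a constant $C>0$ such that for all sufficiently large $n$, every factor $v$ of $w$ of length $n$ has at least $Cn^2$ distinct abelian square factors (i.e., the infimum over such $v$ is $\geq Cn^2$). *)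

theory Defs
  imports Complex_Main "HOL-Library.Sublist"
begin

definition parikh :: "'a list \<Rightarrow> 'a \<Rightarrow> nat" where
  "parikh u = (\<lambda>a. count_list u a)"

definition abelian_square :: "'a list \<Rightarrow> bool" where
  "abelian_square u \<longleftrightarrow> (\<exists>v1 v2. u = v1 @ v2 \<and> v1 \<noteq> [] \<and> parikh v1 = parikh v2)"

definition factor_at :: "(nat \<Rightarrow> 'a) \<Rightarrow> nat \<Rightarrow> nat \<Rightarrow> 'a list" where
  "factor_at w i n = map w [i..<i+n]"

definition factors :: "(nat \<Rightarrow> 'a) \<Rightarrow> nat \<Rightarrow> 'a list set" where
  "factors w n = {factor_at w i n | i. True}"

definition complexity :: "(nat \<Rightarrow> 'a) \<Rightarrow> nat \<Rightarrow> nat" where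
  "complexity w n = card (factors w n)"

definition num_abelian_squares :: "'a list \<Rightarrow> nat" where
  "num_abelian_squares v = card {u. sublist u v \<and> abelian_square u}"

definition recurrence_ok :: "(nat \<Rightarrow> 'a) \<Rightarrow> nat \<Rightarrow> nat \<Rightarrow> bool" where
  "recurrence_ok w n m \<longleftrightarrow> (\<forall>u\<in>factors w m. \<forall>x\<in>factors w n. sublist x u)"

definition recurrence_index :: "(nat \<Rightarrow> 'a) \<Rightarrow> nat \<Rightarrow> nat" where
  "recurrence_index w n = (LEAST m. recurrence_ok w n m)"

definition linearly_recurrent :: "(nat \<Rightarrow> 'a) \<Rightarrow> bool" where
  "linearly_recurrent w \<longleftrightarrow>
     (\<forall>n. \<exists>m. recurrence_ok w n m) \<and>
     (\<exists>K::real. \<forall>n\<ge>1. real (recurrence_index w n) / real n \<le> K)"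

definition abelian_square_rich :: "(nat \<Rightarrow> 'a) \<Rightarrow> bool" where
  "abelian_square_rich w \<longleftrightarrow>
     (\<exists>C::real. C > 0 \<and> (\<forall>\<^sub>F n in sequentially.
        (1 / real (complexity w n)) * (\<Sum>v\<in>factors w n. real (num_abelian_squares v))
          \<ge> C * real n ^ 2))"

definition uniformly_abelian_square_rich :: "(nat \<Rightarrow> 'a) \<Rightarrow> bool" where
  "uniformly_abelian_square_rich w \<longleftrightarrow>
     (\<exists>C::real. C > 0 \<and> (\<forall>\<^sub>F n in sequentially.
        \<forall>v\<in>factors w n. real (num_abelian_squares v) \<ge> C * real n ^ 2))"

end

theory Submission
  imports Defs
begin

(* If the average number of abelian squares over the factors of length m is at least C m^2,
   some factor u of length m has that many. Linear recurrence with constant k puts u inside every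
   factor of length n >= k m, and the count is monotone under taking factors; choosing m = n div k
   loses only the constant factor 4 k^2. *)

lemma num_abelian_squares_mono:
  assumes "sublist u v"
  shows "num_abelian_squares u \<le> num_abelian_squares v"
  unfolding num_abelian_squares_def
proof (rule card_mono)
  show "finite {x. sublist x v \<and> abelian_square x}"
    by (rule finite_subset[of _ "set (sublists v)"]) auto
  show "{x. sublist x u \<and> abelian_square x} \<subseteq> {x. sublist x v \<and> abelian_square x}"
    using assms sublist_order.order.trans by blast
qed

lemma prefix_factor_at:
  assumes "m \<le> m'"
  shows "prefix (factor_at w i m) (factor_at w i m')"
proof -
  have "[i..<i+m'] = [i..<i+m] @ [i+m..<i+m']"
    using assms upt_add_eq_append[of i "i+m" "m'-m"] by simp
  then show ?thesis
    by (simp add: factor_at_def prefixI)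
qed

lemma recurrence_ok_mono:
  assumes "recurrence_ok w n m" and "m \<le> m'"
  shows "recurrence_ok w n m'"
  unfolding recurrence_ok_def
proof (intro ballI)
  fix u x assume "u \<in> factors w m'" and x: "x \<in> factors w n"
  then obtain i where u: "u = factor_at w i m'" by (auto simp: factors_def)
  have "factor_at w i m \<in> factors w m" by (auto simp: factors_def)
  then have "sublist x (factor_at w i m)" using assms(1) x by (auto simp: recurrence_ok_def)
  moreover have "sublist (factor_at w i m) u"
    using u prefix_factor_at[OF assms(2)] prefix_imp_sublist by blast
  ultimately show "sublist x u" using sublist_order.order.trans by blast
qed

lemma exists_ge_average:
  fixes f :: "'b \<Rightarrow> real"
  assumes "c \<le> (1 / real (card F)) * (\<Sum>v\<in>F. f v)" and "c > 0"
  shows "\<exists>v\<in>F. c \<le> f v"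
proof (rule ccontr)
  assume below: "\<not> (\<exists>v\<in>F. c \<le> f v)"
  have "card F \<noteq> 0"
  proof
    assume "card F = 0"
    with assms show False by simp
  qed
  then have "finite F" "F \<noteq> {}" using card_gt_0_iff by blast+
  then have "(\<Sum>v\<in>F. f v) < (\<Sum>v\<in>F. c)"
    using below by (intro sum_strict_mono) auto
  then have "(1 / real (card F)) * (\<Sum>v\<in>F. f v) < c"
    using \<open>card F \<noteq> 0\<close> by (simp add: field_simps)
  with assms(1) show False by simp
qed

lemma abelian_square_rich_imp_rich_factor:
  assumes "abelian_square_rich w"
  obtains C N where "C > 0"
    and "\<And>n. N \<le> n \<Longrightarrow> \<exists>u\<in>factors w n. C * real n ^ 2 \<le> real (num_abelian_squares u)"
proof -
  obtain C N where "C > 0" and avg: "\<And>n. N \<le> n \<Longrightarrow>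
      C * real n ^ 2 \<le> (1 / real (complexity w n)) * (\<Sum>v\<in>factors w n. real (num_abelian_squares v))"
    using assms unfolding abelian_square_rich_def eventually_sequentially by blast
  have "\<exists>u\<in>factors w n. C * real n ^ 2 \<le> real (num_abelian_squares u)" if "Suc N \<le> n" for n
    using exists_ge_average[OF avg[unfolded complexity_def]] \<open>C > 0\<close> that by simp
  with \<open>C > 0\<close> that show ?thesis by blast
qed

lemma linearly_recurrent_imp_recurrence_ok_mult:
  assumes "linearly_recurrent w"
  obtains k :: nat where "k \<ge> 1" and "\<And>n. n \<ge> 1 \<Longrightarrow> recurrence_ok w n (k * n)"
proof -
  obtain K :: real where ex: "\<And>n. \<exists>m. recurrence_ok w n m"
    and K: "\<And>n. n \<ge> 1 \<Longrightarrow> real (recurrence_index w n) / real n \<le> K"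
    using assms unfolding linearly_recurrent_def by blast
  define k where "k = nat \<lceil>K\<rceil> + 1"
  show ?thesis
  proof (rule that)
    show "k \<ge> 1" by (simp add: k_def)
    fix n :: nat assume "n \<ge> 1"
    have "real (recurrence_index w n) \<le> K * real n"
      using K[OF \<open>n \<ge> 1\<close>] \<open>n \<ge> 1\<close> by (simp add: divide_le_eq)
    also have "\<dots> \<le> real (k * n)"
      unfolding k_def of_nat_mult by (intro mult_right_mono) linarith+
    finally have "recurrence_index w n \<le> k * n" by (simp only: of_nat_le_iff)
    moreover have "recurrence_ok w n (recurrence_index w n)"
      unfolding recurrence_index_def using ex by (rule LeastI_ex)
    ultimately show "recurrence_ok w n (k * n)" using recurrence_ok_mono by blast
  qed
qed

lemma le_twice_mult_div:
  fixes k n :: nat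
  assumes "0 < k" and "k \<le> n"
  shows "n \<le> 2 * k * (n div k)"
proof -
  have "1 \<le> n div k" using assms by (simp add: div_greater_zero_iff Suc_le_eq)
  have "n < k * (n div k + 1)" using assms(1) by (simp add: dividend_less_times_div)
  also have "\<dots> \<le> 2 * k * (n div k)" using \<open>1 \<le> n div k\<close> by simp
  finally show ?thesis by simp
qed

lemma square_le_div_square:
  fixes k n :: nat and C :: real
  assumes "C > 0" and "0 < k" and "k \<le> n"
  shows "C / (4 * real k ^ 2) * real n ^ 2 \<le> C * real (n div k) ^ 2"
proof -
  have "real n \<le> 2 * real k * real (n div k)"
    using le_twice_mult_div[OF assms(2,3)] by (metis of_nat_le_iff of_nat_mult of_nat_numeral)
  then have "real n ^ 2 \<le> (2 * real k * real (n div k)) ^ 2"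
    by (intro power_mono) simp_all
  then have "real n ^ 2 \<le> 4 * real k ^ 2 * real (n div k) ^ 2"
    by (simp add: power_mult_distrib)
  then show ?thesis using assms by (simp add: field_simps)
qed

theorem lemma2:
  fixes w :: "nat \<Rightarrow> 'a"
  assumes "abelian_square_rich w" and "linearly_recurrent w"
  shows "uniformly_abelian_square_rich w"
proof -
  obtain C N where "C > 0" and rich:
      "\<And>n. N \<le> n \<Longrightarrow> \<exists>u\<in>factors w n. C * real n ^ 2 \<le> real (num_abelian_squares u)"
    using abelian_square_rich_imp_rich_factor[OF assms(1)] by blast
  obtain k where "k \<ge> 1" and rec: "\<And>n. n \<ge> 1 \<Longrightarrow> recurrence_ok w n (k * n)"
    using linearly_recurrent_imp_recurrence_ok_mult[OF assms(2)] by blast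
  have "C / (4 * real k ^ 2) * real n ^ 2 \<le> real (num_abelian_squares v)"
    if n: "k * Suc N \<le> n" and v: "v \<in> factors w n" for n v
  proof -
    define m where "m = n div k"
    have "Suc N \<le> m"
      using div_le_mono[OF n, of k] \<open>k \<ge> 1\<close> by (simp add: m_def)
    then obtain u where u: "u \<in> factors w m" and "C * real m ^ 2 \<le> real (num_abelian_squares u)"
      using rich[of m] Suc_leD by blast
    moreover have "recurrence_ok w m n"
      using recurrence_ok_mono[OF rec] \<open>Suc N \<le> m\<close> by (simp add: m_def)
    then have "num_abelian_squares u \<le> num_abelian_squares v"
      using u v num_abelian_squares_mono by (auto simp: recurrence_ok_def)
    moreover have "C / (4 * real k ^ 2) * real n ^ 2 \<le> C * real m ^ 2"
      using square_le_div_square[OF \<open>C > 0\<close>, of k n] \<open>k \<ge> 1\<close> n by (simp add: m_def)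
    ultimately show ?thesis by linarith
  qed
  moreover have "C / (4 * real k ^ 2) > 0" using \<open>C > 0\<close> \<open>k \<ge> 1\<close> by simp
  ultimately show ?thesis
    unfolding uniformly_abelian_square_rich_def eventually_sequentially by blast
qed

end
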